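(* Let $V$ be a left vector space over a field $K$ (any dimension) with $\mathcal G\neq\emptyset$, and let $d\ge0$ be an integer. For $X,Y\in\mathcal G$ the following are equivalent: (i) $X$ and $Y$ are at distance $d$ in the Grassmann graph on $\mathcal G$; (ii) $\dim((X+Y)/X)=\dim((X+Y)/Y)=d$; (iii) $\dim(X/(X\cap Y))=\dim(Y/(X\cap Y))=d$.
   Context: Fields are not necessarily commutative (division rings). $\mathcal G$ denotes the set of all subspaces $X\le V$ such that $X$ is isomorphic to $V/X$. Two elements $X,Y\in\mathcal G$ are adjacent if $\dim((X+Y)/X)=\dim((X+Y)/Y)=1$. The Grassmann graph on $\mathcal G$ has vertex set $\mathcal G$ and edges the pairs of adjacent elements; distance means graph distance (infinite if no path exists). *)

theory Defs
  imports Main "HOL-Library.Extended_Nat"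
begin

text \<open>A left vector space over a division ring 'k: the carrier V is the whole type 'v,
  with scalar multiplication smult acting on the left.\<close>
definition left_vector_space :: "('k::division_ring \<Rightarrow> 'v::ab_group_add \<Rightarrow> 'v) \<Rightarrow> bool" where
  "left_vector_space smult \<longleftrightarrow>
     (\<forall>a x y. smult a (x + y) = smult a x + smult a y) \<and>
     (\<forall>a b x. smult (a + b) x = smult a x + smult b x) \<and>
     (\<forall>a b x. smult (a * b) x = smult a (smult b x)) \<and>
     (\<forall>x. smult 1 x = x)"

definition subspace :: "('k::division_ring \<Rightarrow> 'v::ab_group_add \<Rightarrow> 'v) \<Rightarrow> 'v set \<Rightarrow> bool" where
  "subspace smult S \<longleftrightarrow> 0 \<in> S \<and> (\<forall>x\<in>S. \<forall>y\<in>S. x + y \<in> S) \<and> (\<forall>a. \<forall>x\<in>S. smult a x \<in> S)"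

definition ssum :: "'v::ab_group_add set \<Rightarrow> 'v set \<Rightarrow> 'v set" where
  "ssum A B = {a + b | a b. a \<in> A \<and> b \<in> B}"

definition coset :: "'v::ab_group_add set \<Rightarrow> 'v \<Rightarrow> 'v set" where
  "coset X v = (\<lambda>x. v + x) ` X"

text \<open>X is isomorphic to V/X: the quotient V/X is the set of cosets of X, with operations
  defined on representatives; g is a linear bijection from X onto V/X.\<close>
definition iso_to_quotient :: "('k::division_ring \<Rightarrow> 'v::ab_group_add \<Rightarrow> 'v) \<Rightarrow> 'v set \<Rightarrow> bool" where
  "iso_to_quotient smult X \<longleftrightarrow>
     (\<exists>g. bij_betw g X (range (coset X)) \<and>
          (\<forall>a\<in>X. \<forall>b\<in>X. \<forall>c. \<forall>u\<in>g a. \<forall>w\<in>g b.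
              g (smult c a + b) = coset X (smult c u + w)))"

text \<open>dim(A/B) = d (for subspaces B \<subseteq> A): there are d vectors of A whose cosets mod B form
  a basis of A/B (spanning A/B and linearly independent in A/B).\<close>
definition qdim_eq :: "('k::division_ring \<Rightarrow> 'v::ab_group_add \<Rightarrow> 'v) \<Rightarrow> 'v set \<Rightarrow> 'v set \<Rightarrow> nat \<Rightarrow> bool" where
  "qdim_eq smult A B d \<longleftrightarrow>
     (\<exists>v :: nat \<Rightarrow> 'v. (\<forall>i<d. v i \<in> A) \<and>
        (\<forall>a\<in>A. \<exists>c. \<exists>b\<in>B. a = (\<Sum>i<d. smult (c i) (v i)) + b) \<and>
        (\<forall>c. (\<Sum>i<d. smult (c i) (v i)) \<in> B \<longrightarrow> (\<forall>i<d. c i = 0)))"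

definition Gr :: "('k::division_ring \<Rightarrow> 'v::ab_group_add \<Rightarrow> 'v) \<Rightarrow> 'v set set" where
  "Gr smult = {X. subspace smult X \<and> iso_to_quotient smult X}"

definition adjacent :: "('k::division_ring \<Rightarrow> 'v::ab_group_add \<Rightarrow> 'v) \<Rightarrow> 'v set \<Rightarrow> 'v set \<Rightarrow> bool" where
  "adjacent smult X Y \<longleftrightarrow> qdim_eq smult (ssum X Y) X 1 \<and> qdim_eq smult (ssum X Y) Y 1"

definition gwalk :: "('k::division_ring \<Rightarrow> 'v::ab_group_add \<Rightarrow> 'v) \<Rightarrow> 'v set \<Rightarrow> 'v set \<Rightarrow> nat \<Rightarrow> bool" where
  "gwalk smult X Y n \<longleftrightarrow>
     (\<exists>p :: nat \<Rightarrow> 'v set. p 0 = X \<and> p n = Y \<and> (\<forall>i\<le>n. p i \<in> Gr smult) \<and>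
        (\<forall>i<n. adjacent smult (p i) (p (Suc i))))"

text \<open>Graph distance (infinite if no path exists).\<close>
definition gdist :: "('k::division_ring \<Rightarrow> 'v::ab_group_add \<Rightarrow> 'v) \<Rightarrow> 'v set \<Rightarrow> 'v set \<Rightarrow> enat" where
  "gdist smult X Y = Inf (enat ` {n. gwalk smult X Y n})"

end

theory Submission
  imports Defs
begin

text \<open>
  Write \<open>W = X \<inter> Y\<close>. The second isomorphism theorem gives \<open>(X + Y)/X \<cong> Y/W\<close> and
  \<open>(X + Y)/Y \<cong> X/W\<close>, hence (ii) \<open>\<Leftrightarrow>\<close> (iii); and a common codimension \<open>n\<close> of \<open>X\<close> and
  \<open>Y\<close> in \<open>X + Y\<close>, if there is one, is unique.

  Along an edge \<open>Y \<sim> Z\<close> this common codimension grows by at most one (a dimension count in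
  \<open>X + Y + Z\<close>), so a walk of length \<open>m\<close> from \<open>X\<close> to \<open>Y\<close> forces \<open>n \<le> m\<close>.

  Conversely, take bases \<open>Sx\<close> of \<open>X/W\<close> and \<open>Sy\<close> of \<open>Y/W\<close> and exchange the vectors of
  \<open>Sx\<close> for those of \<open>Sy\<close> one at a time; consecutive subspaces are adjacent. Each intermediate
  subspace lies in \<open>\<G>\<close>: choosing (Zorn) a complement \<open>C \<supseteq> W\<close> of \<open>span (Sx \<union> Sy)\<close>, it is
  the image of \<open>X\<close> under a linear involution of \<open>V\<close> fixing \<open>C\<close> and permuting \<open>Sx \<union> Sy\<close>,
  and such an automorphism transports an isomorphism \<open>X \<cong> V/X\<close>.
\<close>

lemma partial_swap_exists:
  assumes bij: "bij_betw \<sigma> Sx Sy" and disj: "Sx \<inter> Sy = {}" and J: "J \<subseteq> Sx"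
  obtains \<tau> where "\<And>t. t \<in> Sx \<union> Sy \<Longrightarrow> \<tau> t \<in> Sx \<union> Sy"
    "\<And>t. t \<in> Sx \<union> Sy \<Longrightarrow> \<tau> (\<tau> t) = t" "\<tau> ` Sx = (Sx - J) \<union> \<sigma> ` J"
proof -
  define \<tau> where
    "\<tau> t = (if t \<in> J then \<sigma> t else if t \<in> \<sigma> ` J then inv_into Sx \<sigma> t else t)" for t
  have inj: "inj_on \<sigma> Sx" and im: "\<sigma> ` Sx = Sy" using bij by (auto simp: bij_betw_def)
  have \<sigma>J: "\<sigma> s \<in> Sy" "\<sigma> s \<notin> J" if "s \<in> J" for s using that J im disj by auto
  have \<tau>J: "\<tau> s = \<sigma> s" if "s \<in> J" for s using that by (simp add: \<tau>_def)
  have \<tau>\<sigma>J: "\<tau> (\<sigma> s) = s" if "s \<in> J" for s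
    using that \<sigma>J[OF that] J inv_into_f_f[OF inj] by (auto simp: \<tau>_def)
  have \<tau>id: "\<tau> t = t" if "t \<notin> J" "t \<notin> \<sigma> ` J" for t using that by (simp add: \<tau>_def)
  have trichotomy: "(t \<in> J \<Longrightarrow> P) \<Longrightarrow> (\<And>s. s \<in> J \<Longrightarrow> t = \<sigma> s \<Longrightarrow> P)
      \<Longrightarrow> (t \<notin> J \<Longrightarrow> t \<notin> \<sigma> ` J \<Longrightarrow> P) \<Longrightarrow> P" for t P
    by blast
  have "\<tau> t \<in> Sx \<union> Sy" if "t \<in> Sx \<union> Sy" for t
    by (rule trichotomy[of t]) (use that J \<sigma>J \<tau>J \<tau>\<sigma>J \<tau>id in auto)
  moreover have "\<tau> (\<tau> t) = t" for t
    by (rule trichotomy[of t]) (use \<sigma>J \<tau>J \<tau>\<sigma>J \<tau>id in auto)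
  moreover have "\<tau> ` Sx = (Sx - J) \<union> \<sigma> ` J"
  proof
    have \<sigma>J_Sx: "\<sigma> ` J \<inter> Sx = {}" using \<sigma>J disj by blast
    show "\<tau> ` Sx \<subseteq> (Sx - J) \<union> \<sigma> ` J"
    proof
      fix u assume "u \<in> \<tau> ` Sx"
      then obtain t where t: "t \<in> Sx" "u = \<tau> t" by blast
      show "u \<in> (Sx - J) \<union> \<sigma> ` J"
      proof (cases "t \<in> J")
        case True
        then show ?thesis using t \<tau>J by blast
      next
        case False
        moreover have "t \<notin> \<sigma> ` J" using t \<sigma>J_Sx by blast
        ultimately have "u = t" using t \<tau>id by simp
        then show ?thesis using t False by blast
      qed
    qed
    have "\<sigma> s \<in> \<tau> ` Sx" if "s \<in> J" for s
      using that J \<tau>J[OF that] by (metis image_eqI subsetD)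
    moreover have "t \<in> \<tau> ` Sx" if "t \<in> Sx - J" for t
    proof -
      have "t \<notin> \<sigma> ` J" using that \<sigma>J_Sx by blast
      then have "\<tau> t = t" using that \<tau>id by blast
      then show ?thesis using that by (metis DiffD1 image_eqI)
    qed
    ultimately show "(Sx - J) \<union> \<sigma> ` J \<subseteq> \<tau> ` Sx" by blast
  qed
  ultimately show ?thesis using that by blast
qed

locale left_vs =
  fixes smult :: "'k::division_ring \<Rightarrow> 'v::ab_group_add \<Rightarrow> 'v"
  assumes left_vector_space: "left_vector_space smult"
begin

lemma smult_add_right: "smult a (x + y) = smult a x + smult a y"
  using left_vector_space unfolding left_vector_space_def by blast
lemma smult_add_left: "smult (a + b) x = smult a x + smult b x"
  using left_vector_space unfolding left_vector_space_def by blast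
lemma smult_assoc: "smult (a * b) x = smult a (smult b x)"
  using left_vector_space unfolding left_vector_space_def by blast
lemma smult_one [simp]: "smult 1 x = x"
  using left_vector_space unfolding left_vector_space_def by blast

lemma smult_zero_left [simp]: "smult 0 x = 0"
  using smult_add_left[of 0 0 x] by simp
lemma smult_zero_right [simp]: "smult a 0 = 0"
  using smult_add_right[of a 0 0] by simp
lemma smult_minus_left: "smult (- a) x = - smult a x"
  using smult_add_left[of a "-a" x] by (simp add: eq_neg_iff_add_eq_0 add.commute)
lemma smult_minus_right: "smult a (- x) = - smult a x"
  using smult_add_right[of a x "-x"] by (simp add: eq_neg_iff_add_eq_0 add.commute)
lemma smult_diff_right: "smult a (x - y) = smult a x - smult a y"
  using smult_add_right[of a x "-y"] by (simp add: smult_minus_right)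
lemma smult_diff_left: "smult (a - b) x = smult a x - smult b x"
  using smult_add_left[of a "-b" x] by (simp add: smult_minus_left)
lemma smult_sum_right: "smult a (sum f S) = (\<Sum>i\<in>S. smult a (f i))"
  by (induction S rule: infinite_finite_induct) (auto simp: smult_add_right)
lemma smult_sum_left: "smult (sum f S) x = (\<Sum>i\<in>S. smult (f i) x)"
  by (induction S rule: infinite_finite_induct) (auto simp: smult_add_left)
lemma smult_inverse_cancel: "a \<noteq> 0 \<Longrightarrow> smult (inverse a) (smult a x) = x"
  by (simp flip: smult_assoc)

abbreviation "subsp \<equiv> subspace smult"

lemma subspace_0: "subsp B \<Longrightarrow> 0 \<in> B" by (simp add: subspace_def)
lemma subspace_add: "subsp B \<Longrightarrow> x \<in> B \<Longrightarrow> y \<in> B \<Longrightarrow> x + y \<in> B" by (simp add: subspace_def)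
lemma subspace_smult: "subsp B \<Longrightarrow> x \<in> B \<Longrightarrow> smult a x \<in> B" by (simp add: subspace_def)
lemma subspace_neg: "subsp B \<Longrightarrow> x \<in> B \<Longrightarrow> - x \<in> B"
  using subspace_smult[of B x "-1"] by (simp add: smult_minus_left)
lemma subspace_diff: "subsp B \<Longrightarrow> x \<in> B \<Longrightarrow> y \<in> B \<Longrightarrow> x - y \<in> B"
  using subspace_add[of B x "-y"] subspace_neg[of B y] by simp
lemma subspace_sum: "subsp B \<Longrightarrow> (\<And>i. i \<in> I \<Longrightarrow> f i \<in> B) \<Longrightarrow> sum f I \<in> B"
  by (induction I rule: infinite_finite_induct) (auto simp: subspace_0 subspace_add)
lemma subspace_add_cancel: "subsp B \<Longrightarrow> x \<in> B \<Longrightarrow> (x + y \<in> B) = (y \<in> B)"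
  by (metis add_diff_cancel_left' subspace_add subspace_diff)
lemma subspace_Int: "subsp A \<Longrightarrow> subsp B \<Longrightarrow> subsp (A \<inter> B)"
  by (auto simp: subspace_def)

subsection \<open>Linear combinations and spans modulo a subspace\<close>

definition lincomb :: "'v set \<Rightarrow> ('v \<Rightarrow> 'k) \<Rightarrow> 'v" where
  "lincomb S c = (\<Sum>s\<in>S. smult (c s) s)"

text \<open>\<open>span_mod B S\<close> is \<open>B + span S\<close>; \<open>indep_mod B S\<close> says that the classes of \<open>S\<close> are
  linearly independent in \<open>V/B\<close>, and \<open>quot_dim A B n\<close> that some \<open>n\<close>-element \<open>S \<subseteq> A\<close>
  represents a basis of \<open>A/B\<close>. It is the set-based counterpart of \<open>qdim_eq\<close>.\<close>

definition span_mod :: "'v set \<Rightarrow> 'v set \<Rightarrow> 'v set" where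
  "span_mod B S = {lincomb S c + b | c b. b \<in> B}"

definition indep_mod :: "'v set \<Rightarrow> 'v set \<Rightarrow> bool" where
  "indep_mod B S \<longleftrightarrow> finite S \<and> (\<forall>c. lincomb S c \<in> B \<longrightarrow> (\<forall>s\<in>S. c s = 0))"

definition quot_dim :: "'v set \<Rightarrow> 'v set \<Rightarrow> nat \<Rightarrow> bool" where
  "quot_dim A B n \<longleftrightarrow>
     (\<exists>S. S \<subseteq> A \<and> finite S \<and> card S = n \<and> A \<subseteq> span_mod B S \<and> indep_mod B S)"

lemma lincomb_add: "lincomb S c + lincomb S d = lincomb S (\<lambda>s. c s + d s)"
  by (simp add: lincomb_def smult_add_left sum.distrib)
lemma lincomb_diff: "lincomb S c - lincomb S d = lincomb S (\<lambda>s. c s - d s)"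
  by (simp add: lincomb_def smult_diff_left sum_subtractf)
lemma lincomb_smult: "smult a (lincomb S c) = lincomb S (\<lambda>s. a * c s)"
  by (simp add: lincomb_def smult_sum_right smult_assoc)
lemma lincomb_zero [simp]: "lincomb S (\<lambda>_. 0) = 0"
  by (simp add: lincomb_def)
lemma lincomb_cong: "(\<And>s. s \<in> S \<Longrightarrow> c s = d s) \<Longrightarrow> lincomb S c = lincomb S d"
  by (simp add: lincomb_def)
lemma lincomb_insert:
  "finite S \<Longrightarrow> s \<notin> S \<Longrightarrow> lincomb (insert s S) c = smult (c s) s + lincomb S c"
  by (simp add: lincomb_def)
lemma lincomb_union:
  "finite A \<Longrightarrow> finite B \<Longrightarrow> A \<inter> B = {} \<Longrightarrow> lincomb (A \<union> B) c = lincomb A c + lincomb B c"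
  by (simp add: lincomb_def sum.union_disjoint)
lemma lincomb_extend:
  "finite T \<Longrightarrow> A \<subseteq> T \<Longrightarrow> lincomb A c = lincomb T (\<lambda>t. if t \<in> A then c t else 0)"
  unfolding lincomb_def by (rule sum.mono_neutral_cong_left) auto
lemma lincomb_indicator: "finite S \<Longrightarrow> s \<in> S \<Longrightarrow> lincomb S (\<lambda>t. if t = s then 1 else 0) = s"
  unfolding lincomb_def by (subst sum.remove[of S s]) auto
lemma lincomb_image: "inj_on f A \<Longrightarrow> lincomb (f ` A) c = (\<Sum>s\<in>A. smult (c (f s)) (f s))"
  unfolding lincomb_def by (simp add: sum.reindex)

lemma subspace_lincomb: "subsp B \<Longrightarrow> S \<subseteq> B \<Longrightarrow> lincomb S c \<in> B"
  unfolding lincomb_def by (rule subspace_sum) (auto intro: subspace_smult)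

lemma subspace_span_mod: assumes "subsp B" shows "subsp (span_mod B S)"
  unfolding subspace_def span_mod_def
proof (intro conjI ballI allI)
  show "0 \<in> {lincomb S c + b |c b. b \<in> B}"
    using subspace_0[OF assms] by (auto intro!: exI[of _ "\<lambda>_. 0"])
next
  fix x y assume "x \<in> {lincomb S c + b |c b. b \<in> B}" "y \<in> {lincomb S c + b |c b. b \<in> B}"
  then obtain c b d b' where "x = lincomb S c + b" "y = lincomb S d + b'" "b \<in> B" "b' \<in> B"
    by auto
  then show "x + y \<in> {lincomb S c + b |c b. b \<in> B}"
    by (intro CollectI exI[of _ "\<lambda>s. c s + d s"] exI[of _ "b + b'"])
       (auto simp: subspace_add[OF assms] algebra_simps simp flip: lincomb_add)
next
  fix a x assume "x \<in> {lincomb S c + b |c b. b \<in> B}"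
  then obtain c b where "x = lincomb S c + b" "b \<in> B" by auto
  then show "smult a x \<in> {lincomb S c + b |c b. b \<in> B}"
    by (intro CollectI exI[of _ "\<lambda>s. a * c s"] exI[of _ "smult a b"])
       (auto simp: subspace_smult[OF assms] smult_add_right lincomb_smult)
qed

lemma span_mod_I: "b \<in> B \<Longrightarrow> x = lincomb S c + b \<Longrightarrow> x \<in> span_mod B S"
  unfolding span_mod_def by auto

lemma span_mod_empty: "span_mod B {} = B"
  unfolding span_mod_def by (auto simp: lincomb_def)

lemma span_mod_base: "subsp B \<Longrightarrow> B \<subseteq> span_mod B S"
  unfolding span_mod_def by (auto intro!: exI[of _ "\<lambda>_. 0"])

lemma span_mod_gen: "finite S \<Longrightarrow> subsp B \<Longrightarrow> S \<subseteq> span_mod B S"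
proof
  fix s assume "finite S" "subsp B" "s \<in> S"
  then show "s \<in> span_mod B S"
    by (intro span_mod_I[of 0 B _ S "\<lambda>t. if t = s then 1 else 0"])
       (auto simp: lincomb_indicator subspace_0)
qed

lemma span_mod_least: "subsp A \<Longrightarrow> B \<subseteq> A \<Longrightarrow> S \<subseteq> A \<Longrightarrow> span_mod B S \<subseteq> A"
  unfolding span_mod_def by (auto intro!: subspace_add subspace_lincomb)

lemma span_mod_mono:
  "subsp B' \<Longrightarrow> B \<subseteq> B' \<Longrightarrow> finite S' \<Longrightarrow> S \<subseteq> S' \<Longrightarrow> span_mod B S \<subseteq> span_mod B' S'"
  by (rule span_mod_least) (use subspace_span_mod span_mod_base span_mod_gen in blast)+

lemma indep_mod_not_in: "indep_mod B S \<Longrightarrow> s \<in> S \<Longrightarrow> s \<notin> B"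
proof
  assume "indep_mod B S" "s \<in> S" "s \<in> B"
  then have "lincomb S (\<lambda>t. if t = s then 1 else 0) \<in> B"
    by (simp add: lincomb_indicator indep_mod_def)
  then show False using \<open>indep_mod B S\<close> \<open>s \<in> S\<close> unfolding indep_mod_def by fastforce
qed

subsection \<open>The exchange lemma and the dimension of a quotient\<close>

lemma indep_mod_shear:
  assumes sB: "subsp B" and S: "indep_mod B S" and s0: "s0 \<in> S"
  shows "inj_on (\<lambda>s. s - smult (lam s) s0) (S - {s0})"
    and "indep_mod B ((\<lambda>s. s - smult (lam s) s0) ` (S - {s0}))"
proof -
  define f where "f = (\<lambda>s. s - smult (lam s) s0)"
  have finS: "finite S" and ind: "\<And>c. lincomb S c \<in> B \<Longrightarrow> \<forall>s\<in>S. c s = 0"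
    using S by (simp_all add: indep_mod_def)
  have combine: "(\<Sum>s\<in>S-{s0}. smult (e s) (f s)) =
     lincomb S (\<lambda>s. if s = s0 then - (\<Sum>u\<in>S-{s0}. e u * lam u) else e s)" for e
  proof -
    have "(\<Sum>s\<in>S-{s0}. smult (e s) (f s))
        = (\<Sum>s\<in>S-{s0}. smult (e s) s) - (\<Sum>s\<in>S-{s0}. smult (e s * lam s) s0)"
      by (simp add: f_def smult_diff_right sum_subtractf smult_assoc)
    also have "\<dots> = (\<Sum>s\<in>S-{s0}. smult (e s) s) + smult (- (\<Sum>u\<in>S-{s0}. e u * lam u)) s0"
      by (simp add: smult_sum_left smult_minus_left)
    also have "\<dots> = lincomb S (\<lambda>s. if s = s0 then - (\<Sum>u\<in>S-{s0}. e u * lam u) else e s)"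
      unfolding lincomb_def using finS s0 by (subst sum.remove[of S s0]) (auto simp: add.commute)
    finally show ?thesis .
  qed
  have inj: "inj_on f (S - {s0})"
  proof (rule inj_onI, rule ccontr)
    fix x y assume xy: "x \<in> S - {s0}" "y \<in> S - {s0}" "f x = f y" "x \<noteq> y"
    define e where "e s = (if s = x then 1 else if s = y then -1 else (0::'k))" for s
    have "(\<Sum>s\<in>S-{s0}. smult (e s) (f s)) = (\<Sum>s\<in>{x,y}. smult (e s) (f s))"
      by (rule sum.mono_neutral_right) (use xy finS in \<open>auto simp: e_def\<close>)
    also have "\<dots> = 0"
      using xy(3,4) by (simp add: e_def smult_minus_left)
    finally have "lincomb S (\<lambda>s. if s = s0 then - (\<Sum>u\<in>S-{s0}. e u * lam u) else e s) \<in> B"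
      using combine subspace_0[OF sB] by simp
    then show False using ind xy unfolding e_def by fastforce
  qed
  have "indep_mod B (f ` (S - {s0}))"
    unfolding indep_mod_def
  proof (intro conjI allI impI ballI)
    show "finite (f ` (S - {s0}))" using finS by simp
    fix c s assume c: "lincomb (f ` (S - {s0})) c \<in> B" and s: "s \<in> f ` (S - {s0})"
    have "lincomb (f ` (S - {s0})) c = (\<Sum>u\<in>S-{s0}. smult (c (f u)) (f u))"
      using inj by (simp add: lincomb_image)
    then have "\<forall>u\<in>S. (if u = s0 then - (\<Sum>w\<in>S-{s0}. c (f w) * lam w) else c (f u)) = 0"
      using combine c by (intro ind) simp
    moreover obtain u where "u \<in> S - {s0}" "s = f u" using s by auto
    ultimately show "c s = 0" by auto
  qed
  then show "inj_on (\<lambda>s. s - smult (lam s) s0) (S - {s0})"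
    and "indep_mod B ((\<lambda>s. s - smult (lam s) s0) ` (S - {s0}))"
    using inj by (simp_all add: f_def)
qed

text \<open>One step of Steinitz exchange: if \<open>S\<close> lies in the span of \<open>insert t T\<close> and some
  member \<open>s0\<close> of \<open>S\<close> involves \<open>t\<close>, subtracting suitable multiples of \<open>s0\<close> eliminates \<open>t\<close>.\<close>

lemma indep_mod_exchange:
  assumes sB: "subsp B" and S: "indep_mod B S" and ST: "S \<subseteq> span_mod B (insert t T)"
    and T: "finite T" "t \<notin> T"
  obtains S' where "indep_mod B S'" "S' \<subseteq> span_mod B T" "card S \<le> Suc (card S')"
proof -
  have finS: "finite S" using S by (simp add: indep_mod_def)
  have "\<forall>s\<in>S. \<exists>c b. b \<in> B \<and> s = lincomb (insert t T) c + b"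
    using ST unfolding span_mod_def by blast
  then obtain cf bf where cfb: "\<And>s. s \<in> S \<Longrightarrow> bf s \<in> B \<and> s = lincomb (insert t T) (cf s) + bf s"
    by metis
  define \<alpha> where "\<alpha> s = cf s t" for s
  have rep: "s = smult (\<alpha> s) t + lincomb T (cf s) + bf s" if "s \<in> S" for s
    using cfb[OF that] T by (simp add: lincomb_insert \<alpha>_def add.assoc)
  show ?thesis
  proof (cases "\<forall>s\<in>S. \<alpha> s = 0")
    case True
    then have "S \<subseteq> span_mod B T" using rep cfb by (auto intro: span_mod_I)
    with S that show ?thesis by simp
  next
    case False
    then obtain s0 where s0: "s0 \<in> S" "\<alpha> s0 \<noteq> 0" by auto
    define lam where "lam s = \<alpha> s * inverse (\<alpha> s0)" for s
    define f where "f = (\<lambda>s. s - smult (lam s) s0)"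
    have lam: "lam s * \<alpha> s0 = \<alpha> s" for s
      using s0(2) by (simp add: lam_def mult.assoc)
    have inj: "inj_on f (S - {s0})" and indep: "indep_mod B (f ` (S - {s0}))"
      using indep_mod_shear[OF sB S s0(1)] by (simp_all add: f_def)
    have "f ` (S - {s0}) \<subseteq> span_mod B T"
    proof
      fix x assume "x \<in> f ` (S - {s0})"
      then obtain s where s: "s \<in> S" "x = f s" by auto
      have "smult (lam s) s0
          = smult (\<alpha> s) t + lincomb T (\<lambda>u. lam s * cf s0 u) + smult (lam s) (bf s0)"
        by (subst rep[OF s0(1)]) (simp add: smult_add_right lincomb_smult lam flip: smult_assoc)
      then have "x = lincomb T (\<lambda>u. cf s u - lam s * cf s0 u) + (bf s - smult (lam s) (bf s0))"
        using rep[OF s(1)] unfolding s f_def lincomb_diff[symmetric]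
        by (metis (no_types, lifting) add_diff_add add_diff_cancel_left)
      moreover have "bf s - smult (lam s) (bf s0) \<in> B"
        using cfb s s0 sB by (simp add: subspace_diff subspace_smult)
      ultimately show "x \<in> span_mod B T" by (auto intro: span_mod_I)
    qed
    moreover have "card S \<le> Suc (card (f ` (S - {s0})))"
      using inj finS s0 by (simp add: card_image)
    ultimately show ?thesis using that indep by blast
  qed
qed

lemma indep_mod_card_le:
  assumes "subsp B" "finite T" "indep_mod B S" "S \<subseteq> span_mod B T"
  shows "card S \<le> card T"
  using assms(2-4)
proof (induction T arbitrary: S rule: finite_induct)
  case empty
  then have "S = {}" using indep_mod_not_in[OF empty(1)] by (auto simp: span_mod_empty)
  then show ?case by simp
next
  case (insert t T)
  obtain S' where "indep_mod B S'" "S' \<subseteq> span_mod B T" "card S \<le> Suc (card S')"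
    using indep_mod_exchange[OF assms(1) insert.prems insert.hyps] .
  with insert.IH insert.hyps show ?case by fastforce
qed

lemma indep_mod_insert:
  assumes sB: "subsp B" and U: "indep_mod B U" and x: "x \<notin> span_mod B U"
  shows "indep_mod B (insert x U)"
proof -
  have finU: "finite U" using U by (simp add: indep_mod_def)
  have xU: "x \<notin> U" using x span_mod_gen[OF finU sB] by blast
  show ?thesis unfolding indep_mod_def
  proof (intro conjI allI impI ballI)
    show "finite (insert x U)" using finU by simp
    fix c s assume c: "lincomb (insert x U) c \<in> B" and s: "s \<in> insert x U"
    have eq: "lincomb (insert x U) c = smult (c x) x + lincomb U c"
      using finU xU by (simp add: lincomb_insert)
    have cx: "c x = 0"
    proof (rule ccontr)
      assume ne: "c x \<noteq> 0"
      have "lincomb (insert x U) c - lincomb U c \<in> span_mod B U"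
        using c subspace_span_mod[OF sB] span_mod_base[OF sB] span_mod_gen[OF finU sB]
        by (meson subspace_diff subspace_lincomb subsetD)
      then have "smult (inverse (c x)) (smult (c x) x) \<in> span_mod B U"
        using eq subspace_smult[OF subspace_span_mod[OF sB]] by simp
      then show False using x smult_inverse_cancel[OF ne] by simp
    qed
    then have "lincomb U c \<in> B" using eq c by simp
    then show "c s = 0" using U s cx by (auto simp: indep_mod_def)
  qed
qed

lemma quot_dim_exists:
  assumes "subsp A" "subsp B" "B \<subseteq> A" "finite T" "A \<subseteq> span_mod B T"
  shows "\<exists>m \<le> card T. quot_dim A B m"
proof -
  define K where "K = {card U | U. U \<subseteq> A \<and> indep_mod B U}"
  have bd: "k \<le> card T" if "k \<in> K" for k
    using that indep_mod_card_le[OF assms(2) assms(4)] assms(5) unfolding K_def by blast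
  have finK: "finite K" using bd by (meson finite_nat_set_iff_bounded_le)
  have "0 \<in> K" unfolding K_def by (auto intro!: exI[of _ "{}"] simp: indep_mod_def)
  then have "Max K \<in> K" using finK Max_in by blast
  then obtain U where U: "U \<subseteq> A" "indep_mod B U" "card U = Max K" unfolding K_def by auto
  have "A \<subseteq> span_mod B U"
  proof
    fix a assume a: "a \<in> A"
    show "a \<in> span_mod B U"
    proof (rule ccontr)
      assume na: "a \<notin> span_mod B U"
      have "indep_mod B (insert a U)" by (rule indep_mod_insert[OF assms(2) U(2) na])
      moreover have "a \<notin> U"
        using na span_mod_gen[of U B] U(2) assms(2) by (auto simp: indep_mod_def)
      ultimately have "Suc (card U) \<in> K" using U a unfolding K_def
        by (intro CollectI exI[of _ "insert a U"]) (auto simp: indep_mod_def)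
      then show False using Max_ge[OF finK] U(3) by fastforce
    qed
  qed
  then have "quot_dim A B (card U)" using U unfolding quot_dim_def by (auto simp: indep_mod_def)
  moreover have "card U \<le> card T" using bd \<open>Max K \<in> K\<close> U(3) by simp
  ultimately show ?thesis by blast
qed

lemma quot_dim_unique:
  assumes "subsp B" "quot_dim A B m" "quot_dim A B n" shows "m = n"
proof -
  obtain S where S: "S \<subseteq> A" "finite S" "card S = m" "A \<subseteq> span_mod B S" "indep_mod B S"
    using assms(2) unfolding quot_dim_def by blast
  obtain S' where S': "S' \<subseteq> A" "finite S'" "card S' = n" "A \<subseteq> span_mod B S'" "indep_mod B S'"
    using assms(3) unfolding quot_dim_def by blast
  have "m \<le> n" using indep_mod_card_le[OF assms(1) S'(2) S(5)] S S' by blast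
  moreover have "n \<le> m" using indep_mod_card_le[OF assms(1) S(2) S'(5)] S S' by blast
  ultimately show ?thesis by simp
qed

lemma quot_dim_refl: "subsp A \<Longrightarrow> quot_dim A A 0"
  unfolding quot_dim_def by (auto intro!: exI[of _ "{}"] simp: span_mod_empty indep_mod_def)

lemma quot_dim_basis:
  assumes "subsp X" "subsp W" "W \<subseteq> X" "quot_dim X W d"
  obtains S where "S \<subseteq> X" "finite S" "card S = d" "indep_mod W S" "span_mod W S = X"
proof -
  obtain S where S: "S \<subseteq> X" "finite S" "card S = d" "X \<subseteq> span_mod W S" "indep_mod W S"
    using assms(4) unfolding quot_dim_def by blast
  have "span_mod W S \<subseteq> X" by (rule span_mod_least[OF assms(1) assms(3) S(1)])
  then show ?thesis using that S by blast
qed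

lemma indep_family_inj:
  fixes v :: "nat \<Rightarrow> 'v"
  assumes "subsp B" and indep: "\<forall>c. (\<Sum>i<n. smult (c i) (v i)) \<in> B \<longrightarrow> (\<forall>i<n. c i = 0)"
  shows "inj_on v {..<n}"
proof (rule inj_onI, rule ccontr)
  fix i j assume ij: "i \<in> {..<n}" "j \<in> {..<n}" "v i = v j" "i \<noteq> j"
  define c where "c l = (if l = i then 1 else if l = j then -1 else (0::'k))" for l
  have "(\<Sum>l<n. smult (c l) (v l)) = (\<Sum>l\<in>{i,j}. smult (c l) (v l))"
    by (rule sum.mono_neutral_right) (use ij in \<open>auto simp: c_def\<close>)
  also have "\<dots> = 0" using ij by (simp add: c_def smult_minus_left)
  finally have "c i = 0" using indep subspace_0[OF assms(1)] ij by auto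
  then show False by (simp add: c_def)
qed

lemma quot_dim_if_qdim_eq:
  assumes "subsp B" "qdim_eq smult A B n"
  shows "quot_dim A B n"
proof -
  obtain v where v: "\<forall>i<n. v i \<in> A"
    "\<forall>a\<in>A. \<exists>c. \<exists>b\<in>B. a = (\<Sum>i<n. smult (c i) (v i)) + b"
    "\<forall>c. (\<Sum>i<n. smult (c i) (v i)) \<in> B \<longrightarrow> (\<forall>i<n. c i = 0)"
    using assms(2) unfolding qdim_eq_def by blast
  have inj: "inj_on v {..<n}" using indep_family_inj[OF assms(1) v(3)] .
  define S where "S = v ` {..<n}"
  have lcS: "lincomb S c = (\<Sum>i<n. smult (c (v i)) (v i))" for c
    unfolding S_def using inj by (simp add: lincomb_image)
  show "quot_dim A B n" unfolding quot_dim_def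
  proof (intro exI[of _ S] conjI)
    show "S \<subseteq> A" "finite S" "card S = n" using v(1) inj by (auto simp: S_def card_image)
    show "A \<subseteq> span_mod B S"
    proof
      fix a assume "a \<in> A"
      then obtain c b where cb: "b \<in> B" "a = (\<Sum>i<n. smult (c i) (v i)) + b" using v(2) by blast
      define c' where "c' s = c (the_inv_into {..<n} v s)" for s
      have "(\<Sum>i<n. smult (c i) (v i)) = lincomb S c'"
        unfolding lcS c'_def by (rule sum.cong) (auto simp: the_inv_into_f_f[OF inj])
      then show "a \<in> span_mod B S" using cb by (auto intro: span_mod_I)
    qed
    show "indep_mod B S" unfolding indep_mod_def
    proof (intro conjI allI impI ballI)
      show "finite S" by (simp add: S_def)
      fix c s assume "lincomb S c \<in> B" "s \<in> S"
      then show "c s = 0" using v(3)[rule_format, of "\<lambda>i. c (v i)"] lcS by (auto simp: S_def)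
    qed
  qed
qed

lemma qdim_eq_if_quot_dim:
  assumes "quot_dim A B n"
  shows "qdim_eq smult A B n"
proof -
  obtain S where S: "S \<subseteq> A" "finite S" "card S = n" "A \<subseteq> span_mod B S" "indep_mod B S"
    using assms unfolding quot_dim_def by blast
  obtain h where h: "bij_betw h {0..<n} S" using ex_bij_betw_nat_finite[OF S(2)] S(3) by blast
  have hS: "h ` {..<n} = S" and inj: "inj_on h {..<n}"
    using h by (auto simp: bij_betw_def atLeast0LessThan)
  have lcS: "lincomb S c = (\<Sum>i<n. smult (c (h i)) (h i))" for c
    unfolding hS[symmetric] using inj by (simp add: lincomb_image)
  show "qdim_eq smult A B n" unfolding qdim_eq_def
  proof (intro exI[of _ h] conjI allI impI ballI)
    show "\<And>i. i < n \<Longrightarrow> h i \<in> A" using hS S(1) by auto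
    fix a assume "a \<in> A"
    then obtain c b where "b \<in> B" "a = lincomb S c + b" using S(4) unfolding span_mod_def by blast
    then show "\<exists>c. \<exists>b\<in>B. a = (\<Sum>i<n. smult (c i) (h i)) + b"
      using lcS[of c] by (intro exI[of _ "\<lambda>i. c (h i)"] bexI[of _ b]) auto
  next
    fix c i assume c: "(\<Sum>i<n. smult (c i) (h i)) \<in> B" and i: "i < n"
    define c' where "c' s = c (inv_into {..<n} h s)" for s
    have "lincomb S c' = (\<Sum>i<n. smult (c i) (h i))"
      unfolding lcS c'_def by (rule sum.cong) (auto simp: inv_into_f_f[OF inj])
    then have "\<forall>s\<in>S. c' s = 0" using c S(5) by (simp add: indep_mod_def)
    then show "c i = 0" using i hS inv_into_f_f[OF inj] by (auto simp: c'_def)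
  qed
qed

lemma qdim_eq_iff_quot_dim: "subsp B \<Longrightarrow> qdim_eq smult A B n \<longleftrightarrow> quot_dim A B n"
  using quot_dim_if_qdim_eq qdim_eq_if_quot_dim by blast

lemma quot_dim_trans:
  assumes "subsp P" "subsp Q" "P \<subseteq> Q" "Q \<subseteq> R" "quot_dim R Q a" "quot_dim Q P b"
  shows "quot_dim R P (a + b)"
proof -
  obtain Sa where Sa: "Sa \<subseteq> R" "finite Sa" "card Sa = a" "R \<subseteq> span_mod Q Sa" "indep_mod Q Sa"
    using assms(5) unfolding quot_dim_def by blast
  obtain Sb where Sb: "Sb \<subseteq> Q" "finite Sb" "card Sb = b" "Q \<subseteq> span_mod P Sb" "indep_mod P Sb"
    using assms(6) unfolding quot_dim_def by blast
  have disj: "Sa \<inter> Sb = {}" using indep_mod_not_in[OF Sa(5)] Sb(1) by blast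
  have lcU: "lincomb (Sa \<union> Sb) k = lincomb Sa k + lincomb Sb k" for k
    using lincomb_union[OF Sa(2) Sb(2) disj] .
  show ?thesis unfolding quot_dim_def
  proof (intro exI[of _ "Sa \<union> Sb"] conjI)
    show "Sa \<union> Sb \<subseteq> R" using Sa Sb assms by blast
    show "finite (Sa \<union> Sb)" using Sa Sb by simp
    show "card (Sa \<union> Sb) = a + b" using Sa Sb disj by (simp add: card_Un_disjoint)
    show "R \<subseteq> span_mod P (Sa \<union> Sb)"
    proof
      fix r assume "r \<in> R"
      then obtain c q where cq: "q \<in> Q" "r = lincomb Sa c + q"
        using Sa(4) unfolding span_mod_def by blast
      then obtain c' p where cp: "p \<in> P" "q = lincomb Sb c' + p"
        using Sb(4) unfolding span_mod_def by blast
      define k where "k s = (if s \<in> Sa then c s else c' s)" for s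
      have "lincomb Sa k = lincomb Sa c" by (rule lincomb_cong) (simp add: k_def)
      moreover have "lincomb Sb k = lincomb Sb c'"
        by (rule lincomb_cong) (use disj in \<open>auto simp: k_def\<close>)
      ultimately have "r = lincomb (Sa \<union> Sb) k + p" using cq cp lcU by (simp add: add.assoc)
      then show "r \<in> span_mod P (Sa \<union> Sb)" using cp by (auto intro: span_mod_I)
    qed
    show "indep_mod P (Sa \<union> Sb)" unfolding indep_mod_def
    proof (intro conjI allI impI ballI)
      show "finite (Sa \<union> Sb)" using Sa Sb by simp
      fix k s assume k: "lincomb (Sa \<union> Sb) k \<in> P" and s: "s \<in> Sa \<union> Sb"
      have "lincomb Sb k \<in> Q" using subspace_lincomb[OF assms(2) Sb(1)] .
      moreover have "lincomb Sa k + lincomb Sb k \<in> Q" using k lcU assms(3) by auto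
      ultimately have "lincomb Sa k \<in> Q"
        using assms(2) by (metis add_diff_cancel_right' subspace_diff)
      then have za: "\<forall>s\<in>Sa. k s = 0" using Sa(5) by (simp add: indep_mod_def)
      then have "lincomb Sa k = 0" using lincomb_cong[of Sa k "\<lambda>_. 0"] by simp
      then have "lincomb Sb k \<in> P" using k lcU by simp
      then have "\<forall>s\<in>Sb. k s = 0" using Sb(5) by (simp add: indep_mod_def)
      then show "k s = 0" using za s by blast
    qed
  qed
qed

lemma quot_dim_split:
  assumes "subsp P" "subsp Q" "subsp R" "P \<subseteq> Q" "Q \<subseteq> R" "quot_dim R P n"
  shows "\<exists>a b. quot_dim R Q a \<and> quot_dim Q P b \<and> a + b = n"
proof -
  obtain S where S: "S \<subseteq> R" "finite S" "card S = n" "R \<subseteq> span_mod P S" "indep_mod P S"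
    using assms(6) unfolding quot_dim_def by blast
  have "R \<subseteq> span_mod Q S" using S span_mod_mono[OF assms(2) assms(4) S(2)] by blast
  then obtain a where a: "quot_dim R Q a"
    using quot_dim_exists[OF assms(3) assms(2) assms(5) S(2)] by blast
  obtain b where b: "quot_dim Q P b"
    using quot_dim_exists[OF assms(2) assms(1) assms(4) S(2)] S(4) assms(5) by blast
  have "quot_dim R P (a + b)" by (rule quot_dim_trans[OF assms(1,2,4,5) a b])
  then have "a + b = n" using quot_dim_unique[OF assms(1)] assms(6) by blast
  then show ?thesis using a b by blast
qed

subsection \<open>Sums and intersections of subspaces\<close>

lemma subspace_ssum:
  assumes "subsp X" "subsp Y" shows "subsp (ssum X Y)"
  unfolding subspace_def ssum_def
proof (intro conjI ballI allI)
  show "0 \<in> {a + b |a b. a \<in> X \<and> b \<in> Y}"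
    using assms by (auto intro!: exI[of _ 0] simp: subspace_0)
next
  fix u w assume "u \<in> {a + b |a b. a \<in> X \<and> b \<in> Y}" "w \<in> {a + b |a b. a \<in> X \<and> b \<in> Y}"
  then obtain a b a' b' where "u = a + b" "w = a' + b'" "a \<in> X" "b \<in> Y" "a' \<in> X" "b' \<in> Y"
    by auto
  then show "u + w \<in> {a + b |a b. a \<in> X \<and> b \<in> Y}"
    using assms by (intro CollectI exI[of _ "a + a'"] exI[of _ "b + b'"])
                   (auto simp: subspace_add algebra_simps)
next
  fix c u assume "u \<in> {a + b |a b. a \<in> X \<and> b \<in> Y}"
  then obtain a b where "u = a + b" "a \<in> X" "b \<in> Y" by auto
  then show "smult c u \<in> {a + b |a b. a \<in> X \<and> b \<in> Y}"
    using assms by (intro CollectI exI[of _ "smult c a"] exI[of _ "smult c b"])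
                   (auto simp: smult_add_right subspace_smult)
qed

lemma ssum_commute: "ssum X Y = ssum Y X"
  unfolding ssum_def by (auto; metis add.commute)
lemma ssum_assoc: "ssum (ssum X Y) Z = ssum X (ssum Y Z)"
  unfolding ssum_def by (auto simp: add.assoc) (metis add.assoc)+
lemma ssum_upper1: "subsp Y \<Longrightarrow> X \<subseteq> ssum X Y"
  unfolding ssum_def using subspace_0 by force
lemma ssum_upper2: "subsp X \<Longrightarrow> Y \<subseteq> ssum X Y"
  unfolding ssum_def using subspace_0 by force
lemma ssum_least: "subsp Z \<Longrightarrow> X \<subseteq> Z \<Longrightarrow> Y \<subseteq> Z \<Longrightarrow> ssum X Y \<subseteq> Z"
  unfolding ssum_def using subspace_add by blast
lemma ssum_mono: "X \<subseteq> X' \<Longrightarrow> Y \<subseteq> Y' \<Longrightarrow> ssum X Y \<subseteq> ssum X' Y'"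
  unfolding ssum_def by blast
lemma ssum_idem: "subsp X \<Longrightarrow> ssum X X = X"
  using ssum_upper1[of X X] ssum_least[of X X X] by blast

lemma quot_dim_ssum_le:
  assumes "subsp P" "subsp Q" "subsp T" "P \<subseteq> Q" "quot_dim Q P n"
  shows "\<exists>m \<le> n. quot_dim (ssum Q T) (ssum P T) m"
proof -
  obtain S where S: "S \<subseteq> Q" "finite S" "card S = n" "Q \<subseteq> span_mod P S" "indep_mod P S"
    using assms(5) unfolding quot_dim_def by blast
  have "ssum Q T \<subseteq> span_mod (ssum P T) S"
  proof
    fix x assume "x \<in> ssum Q T"
    then obtain q t where "q \<in> Q" "t \<in> T" "x = q + t" unfolding ssum_def by blast
    moreover then obtain c p where "p \<in> P" "q = lincomb S c + p"
      using S(4) unfolding span_mod_def by blast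
    ultimately have "x = lincomb S c + (p + t)" "p + t \<in> ssum P T" unfolding ssum_def
      by (auto simp: add.assoc)
    then show "x \<in> span_mod (ssum P T) S" by (auto intro: span_mod_I)
  qed
  then show ?thesis
    using quot_dim_exists[OF subspace_ssum[OF assms(2,3)] subspace_ssum[OF assms(1,3)]
        ssum_mono[OF assms(4)] S(2)] S(3)
    by blast
qed

lemma quot_dim_ssum_of_Int:
  assumes "subsp X" "subsp Y" "quot_dim Y (X \<inter> Y) n"
  shows "quot_dim (ssum X Y) X n"
proof -
  obtain S where S: "S \<subseteq> Y" "finite S" "card S = n" "Y \<subseteq> span_mod (X \<inter> Y) S" "indep_mod (X \<inter> Y) S"
    using assms(3) unfolding quot_dim_def by blast
  show ?thesis unfolding quot_dim_def
  proof (intro exI[of _ S] conjI)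
    show "S \<subseteq> ssum X Y" using S(1) ssum_upper2[OF assms(1)] by blast
    show "finite S" "card S = n" using S by auto
    show "ssum X Y \<subseteq> span_mod X S"
    proof
      fix z assume "z \<in> ssum X Y"
      then obtain x y where xy: "x \<in> X" "y \<in> Y" "z = x + y" unfolding ssum_def by blast
      then obtain c w where "w \<in> X \<inter> Y" "y = lincomb S c + w"
        using S(4) unfolding span_mod_def by blast
      then have "z = lincomb S c + (x + w)" "x + w \<in> X"
        using xy assms(1) by (auto simp: subspace_add algebra_simps)
      then show "z \<in> span_mod X S" by (auto intro: span_mod_I)
    qed
    show "indep_mod X S" unfolding indep_mod_def
    proof (intro conjI allI impI)
      show "finite S" by fact
      fix c assume "lincomb S c \<in> X"
      moreover have "lincomb S c \<in> Y" using subspace_lincomb[OF assms(2) S(1)] .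
      ultimately show "\<forall>s\<in>S. c s = 0" using S(5) by (simp add: indep_mod_def)
    qed
  qed
qed

text \<open>The converse direction of the second isomorphism theorem needs a finite spanning set of
  \<open>Y\<close> modulo \<open>X \<inter> Y\<close>: take the \<open>Y\<close>-components of the spanning vectors of \<open>(X + Y)/X\<close>.\<close>

lemma finite_span_mod_Int:
  assumes sX: "subsp X" and sY: "subsp Y"
    and S: "finite S" "S \<subseteq> ssum X Y" "ssum X Y \<subseteq> span_mod X S"
  obtains T where "finite T" "Y \<subseteq> span_mod (X \<inter> Y) T"
proof -
  have sW: "subsp (X \<inter> Y)" using subspace_Int[OF sX sY] .
  have "\<forall>s\<in>S. \<exists>y\<in>Y. s - y \<in> X"
    using S(2) unfolding ssum_def by force
  then obtain yp where yp: "\<And>s. s \<in> S \<Longrightarrow> yp s \<in> Y \<and> s - yp s \<in> X"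
    by metis
  have "Y \<subseteq> span_mod (X \<inter> Y) (yp ` S)"
  proof
    fix y assume y: "y \<in> Y"
    then have "y \<in> ssum X Y" using ssum_upper2[OF sX] by blast
    then obtain c x where x: "x \<in> X" "y = lincomb S c + x"
      using S(3) unfolding span_mod_def by blast
    define z where "z = (\<Sum>s\<in>S. smult (c s) (yp s))"
    have "z \<in> span_mod (X \<inter> Y) (yp ` S)"
      unfolding z_def using span_mod_gen[OF finite_imageI[OF S(1)] sW, of yp]
      by (intro subspace_sum subspace_smult subspace_span_mod sW) auto
    moreover have "z \<in> Y"
      unfolding z_def using yp by (intro subspace_sum subspace_smult sY) auto
    moreover have "y - z \<in> X"
    proof -
      have "(\<Sum>s\<in>S. smult (c s) (s - yp s)) + x \<in> X"
        using x(1) yp by (intro subspace_add subspace_sum subspace_smult sX) auto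
      then show ?thesis
        by (simp add: x(2) z_def lincomb_def smult_diff_right sum_subtractf algebra_simps)
    qed
    ultimately have "y - z \<in> span_mod (X \<inter> Y) (yp ` S)" "z \<in> span_mod (X \<inter> Y) (yp ` S)"
      using y subspace_diff[OF sY] span_mod_base[OF sW] by blast+
    then show "y \<in> span_mod (X \<inter> Y) (yp ` S)"
      using subspace_add[OF subspace_span_mod[OF sW]] by fastforce
  qed
  then show ?thesis using that S(1) by blast
qed

lemma quot_dim_ssum_iff_Int:
  assumes sX: "subsp X" and sY: "subsp Y"
  shows "quot_dim (ssum X Y) X n \<longleftrightarrow> quot_dim Y (X \<inter> Y) n"
proof
  assume "quot_dim Y (X \<inter> Y) n"
  then show "quot_dim (ssum X Y) X n" using quot_dim_ssum_of_Int assms by blast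
next
  assume n: "quot_dim (ssum X Y) X n"
  then obtain S where "finite S" "S \<subseteq> ssum X Y" "ssum X Y \<subseteq> span_mod X S"
    unfolding quot_dim_def by blast
  then obtain T where "finite T" "Y \<subseteq> span_mod (X \<inter> Y) T"
    using finite_span_mod_Int[OF sX sY] by blast
  then obtain m where m: "quot_dim Y (X \<inter> Y) m"
    using quot_dim_exists[OF sY subspace_Int[OF sX sY]] by blast
  then have "quot_dim (ssum X Y) X m" using quot_dim_ssum_of_Int assms by blast
  then show "quot_dim Y (X \<inter> Y) n" using quot_dim_unique[OF sX] n m by blast
qed

subsection \<open>The common codimension along walks\<close>

definition codim_in_sum :: "'v set \<Rightarrow> 'v set \<Rightarrow> nat \<Rightarrow> bool" where
  "codim_in_sum X Y a \<longleftrightarrow> quot_dim (ssum X Y) X a \<and> quot_dim (ssum X Y) Y a"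

text \<open>In \<open>U = X + Y + Z\<close>, \<open>U/X\<close> and \<open>U/Y\<close> have dimension \<open>e + a\<close> with
  \<open>e = dim U/(X + Y) \<le> 1\<close>; since \<open>(Y + Z)/Y\<close> and \<open>(Y + Z)/Z\<close> both have dimension one,
  \<open>dim U/Z = dim U/Y\<close>. So \<open>X\<close> and \<open>Z\<close> have the same codimension \<open>b\<close> in \<open>X + Z\<close>,
  and \<open>b \<le> dim U/X \<le> a + 1\<close>.\<close>

lemma codim_in_sum_triangle:
  assumes sX: "subsp X" and sY: "subsp Y" and sZ: "subsp Z"
    and r1: "codim_in_sum X Y a" and r2: "codim_in_sum Y Z 1"
  shows "\<exists>b \<le> a + 1. codim_in_sum X Z b"
proof -
  define XY where "XY = ssum X Y"
  define YZ where "YZ = ssum Y Z"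
  define XZ where "XZ = ssum X Z"
  define U where "U = ssum XY Z"
  have sXY: "subsp XY" "subsp YZ" "subsp XZ" "subsp U"
    using sX sY sZ by (simp_all add: XY_def YZ_def XZ_def U_def subspace_ssum)
  have U1: "U = ssum YZ X" unfolding U_def XY_def YZ_def
    by (metis ssum_assoc ssum_commute)
  have U2: "U = ssum XZ Y" unfolding U_def XY_def XZ_def
    by (metis ssum_assoc ssum_commute)
  have XYsub: "X \<subseteq> XY" "Y \<subseteq> XY" "XY \<subseteq> U" using sX sY sZ sXY
    by (simp_all add: XY_def U_def ssum_upper1 ssum_upper2)
  have YZsub: "Y \<subseteq> YZ" "Z \<subseteq> YZ" "YZ \<subseteq> U" using sX sY sZ sXY
    by (simp_all add: YZ_def U1 ssum_upper1 ssum_upper2)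
  have XZsub: "X \<subseteq> XZ" "Z \<subseteq> XZ" "XZ \<subseteq> U" using sX sY sZ sXY
    by (simp_all add: XZ_def U2 ssum_upper1 ssum_upper2)
  have a1: "quot_dim XY X a" "quot_dim XY Y a" using r1 by (auto simp: codim_in_sum_def XY_def)
  have o1: "quot_dim YZ Y 1" "quot_dim YZ Z 1" using r2 by (auto simp: codim_in_sum_def YZ_def)
  obtain e where e: "e \<le> 1" "quot_dim (ssum YZ X) (ssum Y X) e"
    using quot_dim_ssum_le[OF sY sXY(2) sX YZsub(1) o1(1)] by blast
  have eU: "quot_dim U XY e" using e(2) by (simp add: U1 XY_def ssum_commute)
  have uX: "quot_dim U X (e + a)" by (rule quot_dim_trans[OF sX sXY(1) XYsub(1) XYsub(3) eU a1(1)])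
  have uY: "quot_dim U Y (e + a)" by (rule quot_dim_trans[OF sY sXY(1) XYsub(2) XYsub(3) eU a1(2)])
  obtain f g where fg: "quot_dim U YZ f" "quot_dim YZ Y g" "f + g = e + a"
    using quot_dim_split[OF sY sXY(2) sXY(4) YZsub(1) YZsub(3) uY] by blast
  have "g = 1" using quot_dim_unique[OF sY fg(2) o1(1)] .
  have uZ: "quot_dim U Z (f + 1)"
    by (rule quot_dim_trans[OF sZ sXY(2) YZsub(2) YZsub(3) fg(1) o1(2)])
  obtain f1 b1 where fb1: "quot_dim U XZ f1" "quot_dim XZ X b1" "f1 + b1 = e + a"
    using quot_dim_split[OF sX sXY(3) sXY(4) XZsub(1) XZsub(3) uX] by blast
  obtain f2 b2 where fb2: "quot_dim U XZ f2" "quot_dim XZ Z b2" "f2 + b2 = f + 1"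
    using quot_dim_split[OF sZ sXY(3) sXY(4) XZsub(2) XZsub(3) uZ] by blast
  have "f1 = f2" using quot_dim_unique[OF sXY(3) fb1(1) fb2(1)] .
  then have "b1 = b2" using fb1(3) fb2(3) fg(3) \<open>g = 1\<close> by simp
  then have "codim_in_sum X Z b1" using fb1 fb2 by (simp add: codim_in_sum_def XZ_def)
  moreover have "b1 \<le> a + 1" using fb1(3) e(1) by simp
  ultimately show ?thesis by blast
qed

lemma Gr_subspace: "X \<in> Gr smult \<Longrightarrow> subsp X" by (simp add: Gr_def)

lemma gwalk_codim_in_sum_le:
  assumes "gwalk smult X Y n"
  shows "\<exists>b \<le> n. codim_in_sum X Y b"
proof -
  obtain p where p: "p 0 = X" "p n = Y" "\<forall>i\<le>n. p i \<in> Gr smult"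
    "\<forall>i<n. adjacent smult (p i) (p (Suc i))"
    using assms unfolding gwalk_def by blast
  have "k \<le> n \<Longrightarrow> \<exists>b \<le> k. codim_in_sum X (p k) b" for k
  proof (induction k)
    case 0
    have "subsp X" using p Gr_subspace by auto
    then show ?case using p(1) by (auto simp: codim_in_sum_def ssum_idem quot_dim_refl)
  next
    case (Suc k)
    then obtain b where b: "b \<le> k" "codim_in_sum X (p k) b" by auto
    have s: "subsp (p k)" "subsp (p (Suc k))" "subsp X" using p Gr_subspace Suc.prems by (auto)
    have "adjacent smult (p k) (p (Suc k))" using p(4) Suc.prems by auto
    then have "codim_in_sum (p k) (p (Suc k)) 1"
      unfolding adjacent_def codim_in_sum_def
      using qdim_eq_iff_quot_dim s by auto
    then obtain b' where "b' \<le> b + 1" "codim_in_sum X (p (Suc k)) b'"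
      using codim_in_sum_triangle[OF s(3) s(1) s(2) b(2)] by blast
    then show ?case using b by (intro exI[of _ b']) auto
  qed
  then show ?thesis using p(2) by blast
qed
subsection \<open>Complements and linear involutions\<close>

lemma subspace_Union_chain:
  assumes "Ch \<noteq> {}" and sub: "\<And>A. A \<in> Ch \<Longrightarrow> subsp A"
    and chain: "\<And>A B. A \<in> Ch \<Longrightarrow> B \<in> Ch \<Longrightarrow> A \<subseteq> B \<or> B \<subseteq> A"
  shows "subsp (\<Union>Ch)"
  unfolding subspace_def
proof (intro conjI ballI allI)
  show "0 \<in> \<Union>Ch" using assms(1) sub subspace_0 by blast
next
  fix x y assume "x \<in> \<Union>Ch" "y \<in> \<Union>Ch"
  then obtain A B where AB: "A \<in> Ch" "B \<in> Ch" "x \<in> A" "y \<in> B" by auto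
  then have "x + y \<in> A \<or> x + y \<in> B"
    using chain[OF AB(1,2)] subspace_add[OF sub[OF AB(1)]] subspace_add[OF sub[OF AB(2)]] by blast
  then show "x + y \<in> \<Union>Ch" using AB by blast
next
  fix a x assume "x \<in> \<Union>Ch"
  then show "smult a x \<in> \<Union>Ch" using sub subspace_smult by blast
qed

lemma indep_mod_span_mod_insert:
  assumes sM: "subsp M" and iM: "indep_mod M T" and v: "v \<notin> span_mod M T"
  shows "indep_mod (span_mod M {v}) T"
  unfolding indep_mod_def
proof (intro conjI allI impI)
  show finT: "finite T" using iM by (simp add: indep_mod_def)
  fix c assume "lincomb T c \<in> span_mod M {v}"
  then obtain k m where m: "m \<in> M" "lincomb T c = smult (k v) v + m"
    unfolding span_mod_def lincomb_def by auto
  have "k v = 0"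
  proof (rule ccontr)
    assume ne: "k v \<noteq> 0"
    have "lincomb T c - m \<in> span_mod M T"
      using subspace_diff[OF subspace_span_mod[OF sM]] span_mod_base[OF sM] m(1)
        subspace_lincomb[OF subspace_span_mod[OF sM] span_mod_gen[OF finT sM]] by blast
    then have "smult (inverse (k v)) (smult (k v) v) \<in> span_mod M T"
      using m(2) subspace_smult[OF subspace_span_mod[OF sM]] by simp
    then show False using v smult_inverse_cancel[OF ne] by simp
  qed
  then have "lincomb T c \<in> M" using m by simp
  then show "\<forall>s\<in>T. c s = 0" using iM by (simp add: indep_mod_def)
qed

text \<open>A subspace \<open>C \<supseteq> W\<close> maximal (Zorn) with \<open>T\<close> independent modulo \<open>C\<close> satisfies
  \<open>V = C \<oplus> span T\<close>.\<close>

lemma complement_exists: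
  assumes sW: "subsp W" and T: "indep_mod W T"
  obtains C where "subsp C" "W \<subseteq> C" "indep_mod C T" "span_mod C T = UNIV"
proof -
  define F where "F = {C. subsp C \<and> W \<subseteq> C \<and> indep_mod C T}"
  have "\<exists>U\<in>F. \<forall>X\<in>Ch. X \<subseteq> U" if Ch: "Ch \<in> chains F" for Ch
  proof (cases "Ch = {}")
    case True
    then show ?thesis using sW T by (auto simp: F_def)
  next
    case False
    have sub: "Ch \<subseteq> F" and chain: "\<forall>A\<in>Ch. \<forall>B\<in>Ch. A \<subseteq> B \<or> B \<subseteq> A"
      using Ch unfolding chains_def chain_subset_def by auto
    have "subsp (\<Union>Ch)"
      using subspace_Union_chain[OF False] sub chain by (auto simp: F_def)
    moreover have "indep_mod (\<Union>Ch) T"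
      using sub T by (auto simp: F_def indep_mod_def)
    ultimately have "\<Union>Ch \<in> F" using False sub by (auto simp: F_def)
    then show ?thesis by blast
  qed
  then obtain M where M: "M \<in> F" "\<forall>X\<in>F. M \<subseteq> X \<longrightarrow> X = M"
    using Zorn_Lemma2[of F] by blast
  have sM: "subsp M" and WM: "W \<subseteq> M" and iM: "indep_mod M T" using M(1) by (auto simp: F_def)
  have "span_mod M T = UNIV"
  proof (rule ccontr)
    assume "span_mod M T \<noteq> UNIV"
    then obtain v where v: "v \<notin> span_mod M T" by auto
    have fin: "finite {v}" by simp
    have "span_mod M {v} \<in> F"
      using indep_mod_span_mod_insert[OF sM iM v] subspace_span_mod[OF sM] span_mod_base[OF sM] WM
      by (auto simp: F_def)
    then have "span_mod M {v} = M" using M(2) span_mod_base[OF sM] by blast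
    then have "v \<in> M" using span_mod_gen[OF fin sM] by auto
    then show False using v span_mod_base[OF sM] by blast
  qed
  then show ?thesis using that sM WM iM by blast
qed

definition linear_map :: "('v \<Rightarrow> 'v) \<Rightarrow> bool" where
  "linear_map \<phi> \<longleftrightarrow> (\<forall>a u v. \<phi> (smult a u + v) = smult a (\<phi> u) + \<phi> v)"

lemma linear_map_add: "linear_map \<phi> \<Longrightarrow> \<phi> (u + v) = \<phi> u + \<phi> v"
  unfolding linear_map_def by (drule spec[of _ 1]) simp
lemma linear_map_0: "linear_map \<phi> \<Longrightarrow> \<phi> 0 = 0"
  using linear_map_add[of \<phi> 0 0] by simp
lemma linear_map_smult: "linear_map \<phi> \<Longrightarrow> \<phi> (smult a u) = smult a (\<phi> u)"
  using linear_map_0[of \<phi>] unfolding linear_map_def by (metis add.right_neutral)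
lemma linear_map_sum: "linear_map \<phi> \<Longrightarrow> \<phi> (sum f I) = (\<Sum>i\<in>I. \<phi> (f i))"
  by (induction I rule: infinite_finite_induct) (auto simp: linear_map_0 linear_map_add)
lemma linear_map_lincomb:
  "linear_map \<phi> \<Longrightarrow> \<phi> (lincomb A c) = (\<Sum>t\<in>A. smult (c t) (\<phi> t))"
  unfolding lincomb_def by (simp add: linear_map_sum linear_map_smult)

lemma coordinates_mod_exist:
  assumes sC: "subsp C" and iT: "indep_mod C T" and spT: "span_mod C T = UNIV"
  obtains co where "\<And>v. v - lincomb T (co v) \<in> C"
    and "\<And>v k t. v - lincomb T k \<in> C \<Longrightarrow> t \<in> T \<Longrightarrow> co v t = k t"
proof -
  have "\<exists>k. v - lincomb T k \<in> C" for v
  proof -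
    have "v \<in> span_mod C T" using spT by simp
    then obtain k c where "c \<in> C" "v = lincomb T k + c" unfolding span_mod_def by blast
    then show ?thesis by (intro exI[of _ k]) (simp add: add_diff_cancel_left')
  qed
  then obtain co where co: "\<And>v. v - lincomb T (co v) \<in> C" by metis
  moreover have "co v t = k t" if "v - lincomb T k \<in> C" "t \<in> T" for v k t
  proof -
    have "(v - lincomb T k) - (v - lincomb T (co v)) \<in> C"
      using that(1) co subspace_diff[OF sC] by blast
    then have "lincomb T (\<lambda>t. co v t - k t) \<in> C" by (simp add: lincomb_diff[symmetric])
    then show ?thesis using iT that(2) by (auto simp: indep_mod_def)
  qed
  ultimately show ?thesis using that by blast
qed

lemma linear_involution_extending:
  assumes sC: "subsp C" and iT: "indep_mod C T" and spT: "span_mod C T = UNIV"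
    and tT: "\<And>t. t \<in> T \<Longrightarrow> \<tau> t \<in> T" and tt: "\<And>t. t \<in> T \<Longrightarrow> \<tau> (\<tau> t) = t"
  obtains \<phi> where "linear_map \<phi>" "\<And>v. \<phi> (\<phi> v) = v" "\<And>c. c \<in> C \<Longrightarrow> \<phi> c = c"
    "\<And>t. t \<in> T \<Longrightarrow> \<phi> t = \<tau> t"
proof -
  have finT: "finite T" using iT by (simp add: indep_mod_def)
  obtain co where co: "\<And>v. v - lincomb T (co v) \<in> C"
    and uniq: "\<And>v k t. v - lincomb T k \<in> C \<Longrightarrow> t \<in> T \<Longrightarrow> co v t = k t"
    using coordinates_mod_exist[OF sC iT spT] by blast
  define \<phi> where "\<phi> v = v - lincomb T (co v) + lincomb T (\<lambda>t. co v (\<tau> t))" for v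
  have \<phi>_eq: "\<phi> v = v - lincomb T k + lincomb T (\<lambda>t. k (\<tau> t))" if "v - lincomb T k \<in> C" for v k
  proof -
    have "lincomb T (co v) = lincomb T k"
      by (rule lincomb_cong) (simp add: uniq[OF that])
    moreover have "lincomb T (\<lambda>t. co v (\<tau> t)) = lincomb T (\<lambda>t. k (\<tau> t))"
      by (rule lincomb_cong) (simp add: uniq[OF that] tT)
    ultimately show ?thesis by (simp add: \<phi>_def)
  qed
  have "linear_map \<phi>" unfolding linear_map_def
  proof (intro allI)
    fix a u v
    define k where "k = (\<lambda>t. a * co u t + co v t)"
    have lk: "lincomb T k = smult a (lincomb T (co u)) + lincomb T (co v)"
      by (simp add: k_def lincomb_smult lincomb_add)
    have lk\<tau>: "lincomb T (\<lambda>t. k (\<tau> t))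
        = smult a (lincomb T (\<lambda>t. co u (\<tau> t))) + lincomb T (\<lambda>t. co v (\<tau> t))"
      by (simp add: k_def lincomb_smult lincomb_add)
    have "smult a u + v - lincomb T k = smult a (u - lincomb T (co u)) + (v - lincomb T (co v))"
      by (simp only: lk add_diff_add smult_diff_right)
    also have "\<dots> \<in> C" by (intro subspace_add[OF sC] subspace_smult[OF sC] co)
    finally have "\<phi> (smult a u + v) = smult a u + v - lincomb T k + lincomb T (\<lambda>t. k (\<tau> t))"
      by (rule \<phi>_eq)
    also have "\<dots> = smult a (\<phi> u) + \<phi> v"
      unfolding \<phi>_def lk lk\<tau> smult_add_right smult_diff_right by (simp add: algebra_simps)
    finally show "\<phi> (smult a u + v) = smult a (\<phi> u) + \<phi> v" .
  qed
  moreover have "\<phi> (\<phi> v) = v" for v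
  proof -
    have "\<phi> v - lincomb T (\<lambda>t. co v (\<tau> t)) \<in> C" using co by (simp add: \<phi>_def)
    then have "\<phi> (\<phi> v) = \<phi> v - lincomb T (\<lambda>t. co v (\<tau> t)) + lincomb T (\<lambda>t. co v (\<tau> (\<tau> t)))"
      by (rule \<phi>_eq)
    also have "lincomb T (\<lambda>t. co v (\<tau> (\<tau> t))) = lincomb T (co v)"
      by (rule lincomb_cong) (simp add: tt)
    finally show ?thesis by (simp add: \<phi>_def)
  qed
  moreover have "\<phi> c = c" if "c \<in> C" for c
    using \<phi>_eq[of c "\<lambda>_. 0"] that by simp
  moreover have "\<phi> t = \<tau> t" if t: "t \<in> T" for t
  proof -
    define \<delta> where "\<delta> = (\<lambda>u. if u = t then 1 else (0::'k))"
    have "t - lincomb T \<delta> \<in> C"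
      using lincomb_indicator[OF finT t] subspace_0[OF sC] by (simp add: \<delta>_def)
    then have "\<phi> t = t - lincomb T \<delta> + lincomb T (\<lambda>u. \<delta> (\<tau> u))" by (rule \<phi>_eq)
    also have "\<dots> = lincomb T (\<lambda>u. \<delta> (\<tau> u))"
      using lincomb_indicator[OF finT t] by (simp add: \<delta>_def)
    also have "\<dots> = lincomb T (\<lambda>u. if u = \<tau> t then 1 else 0)"
      by (rule lincomb_cong) (use t tt in \<open>force simp: \<delta>_def\<close>)
    also have "\<dots> = \<tau> t" using lincomb_indicator[OF finT tT[OF t]] .
    finally show ?thesis .
  qed
  ultimately show ?thesis using that by blast
qed

lemma subspace_image_linear:
  assumes lin: "linear_map \<phi>" and sX: "subsp X"
  shows "subsp (\<phi> ` X)"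
  unfolding subspace_def
proof (intro conjI ballI allI)
  show "0 \<in> \<phi> ` X" using linear_map_0[OF lin] subspace_0[OF sX] by force
next
  fix x y assume "x \<in> \<phi> ` X" "y \<in> \<phi> ` X"
  then obtain x0 y0 where "x0 \<in> X" "y0 \<in> X" "x = \<phi> x0" "y = \<phi> y0" by auto
  then show "x + y \<in> \<phi> ` X"
    by (intro rev_image_eqI[of "x0 + y0"]) (auto simp: linear_map_add[OF lin] subspace_add[OF sX])
next
  fix a x assume "x \<in> \<phi> ` X"
  then obtain x0 where "x0 \<in> X" "x = \<phi> x0" by auto
  then show "smult a x \<in> \<phi> ` X"
    by (intro rev_image_eqI[of "smult a x0"])
       (auto simp: linear_map_smult[OF lin] subspace_smult[OF sX])
qed

text \<open>If \<open>g : X \<rightarrow> V/X\<close> is an isomorphism, so is \<open>z \<mapsto> \<phi> (g (\<phi> z)) : \<phi> X \<rightarrow> V/\<phi> X\<close>.\<close>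

lemma Gr_image_linear_involution:
  assumes lin: "linear_map \<phi>" and inv: "\<And>v. \<phi> (\<phi> v) = v" and X: "X \<in> Gr smult"
  shows "\<phi> ` X \<in> Gr smult"
proof -
  define Z where "Z = \<phi> ` X"
  have injphi: "inj \<phi>" by (rule inj_on_inverseI[of _ \<phi>]) (rule inv)
  have cos: "\<phi> ` coset X w = coset Z (\<phi> w)" for w
    unfolding coset_def Z_def by (auto simp: linear_map_add[OF lin] image_image)
  obtain g where g: "bij_betw g X (range (coset X))"
    "\<forall>a\<in>X. \<forall>b\<in>X. \<forall>c. \<forall>u\<in>g a. \<forall>w\<in>g b. g (smult c a + b) = coset X (smult c u + w)"
    using X unfolding Gr_def iso_to_quotient_def by blast
  have bij_\<phi>: "bij_betw \<phi> Z X"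
    unfolding Z_def by (rule bij_betw_byWitness[of _ \<phi>]) (use inv in auto)
  have bij_image: "bij_betw ((`) \<phi>) (range (coset X)) (range (coset Z))"
  proof (rule bij_betw_imageI)
    show "inj_on ((`) \<phi>) (range (coset X))"
      using injphi by (simp add: inj_on_def inj_image_eq_iff)
    have "surj \<phi>" by (rule surjI[of \<phi> \<phi>]) (rule inv)
    have "(`) \<phi> ` range (coset X) = coset Z ` range \<phi>"
      by (simp add: image_image cos)
    then show "(`) \<phi> ` range (coset X) = range (coset Z)"
      using \<open>surj \<phi>\<close> by simp
  qed
  from bij_betw_trans[OF bij_betw_trans[OF bij_\<phi> g(1)] bij_image]
  have bij: "bij_betw (\<lambda>z. \<phi> ` g (\<phi> z)) Z (range (coset Z))" by (simp add: comp_def)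
  have "\<forall>a\<in>Z. \<forall>b\<in>Z. \<forall>c. \<forall>u\<in>\<phi> ` g (\<phi> a). \<forall>w\<in>\<phi> ` g (\<phi> b).
          \<phi> ` g (\<phi> (smult c a + b)) = coset Z (smult c u + w)"
  proof (intro ballI allI)
    fix a b c u w assume ab: "a \<in> Z" "b \<in> Z" and u: "u \<in> \<phi> ` g (\<phi> a)" and w: "w \<in> \<phi> ` g (\<phi> b)"
    obtain u0 w0 where uw0: "u0 \<in> g (\<phi> a)" "u = \<phi> u0" "w0 \<in> g (\<phi> b)" "w = \<phi> w0"
      using u w by blast
    have "\<phi> a \<in> X" "\<phi> b \<in> X" using ab inv by (auto simp: Z_def)
    then have "\<phi> ` g (\<phi> (smult c a + b)) = \<phi> ` coset X (smult c u0 + w0)"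
      using g(2) uw0 lin by (simp add: linear_map_def)
    also have "\<dots> = coset Z (smult c u + w)" using cos lin uw0 by (simp add: linear_map_def)
    finally show "\<phi> ` g (\<phi> (smult c a + b)) = coset Z (smult c u + w)" .
  qed
  then have "iso_to_quotient smult Z"
    using bij unfolding iso_to_quotient_def by blast
  then show ?thesis
    using subspace_image_linear[OF lin Gr_subspace[OF X]] by (simp add: Gr_def Z_def)
qed

subsection \<open>Exchanging a basis of \<open>X/W\<close> for one of \<open>Y/W\<close>\<close>

lemma image_span_mod:
  assumes lin: "linear_map \<phi>" and fixW: "\<And>w. w \<in> W \<Longrightarrow> \<phi> w = w"
    and onA: "\<And>t. t \<in> A \<Longrightarrow> \<phi> t = \<tau> t" and inj: "inj_on \<tau> A"
  shows "\<phi> ` span_mod W A = span_mod W (\<tau> ` A)"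
proof
  show "\<phi> ` span_mod W A \<subseteq> span_mod W (\<tau> ` A)"
  proof
    fix y assume "y \<in> \<phi> ` span_mod W A"
    then obtain c w where cw: "w \<in> W" "y = \<phi> (lincomb A c + w)" unfolding span_mod_def by blast
    have "y = (\<Sum>t\<in>A. smult (c t) (\<tau> t)) + w"
      using cw by (simp add: linear_map_add[OF lin] linear_map_lincomb[OF lin] fixW onA)
    also have "(\<Sum>t\<in>A. smult (c t) (\<tau> t)) = lincomb (\<tau> ` A) (\<lambda>s. c (inv_into A \<tau> s))"
      using inj by (simp add: lincomb_image inv_into_f_f)
    finally show "y \<in> span_mod W (\<tau> ` A)" using cw by (auto intro: span_mod_I)
  qed
  show "span_mod W (\<tau> ` A) \<subseteq> \<phi> ` span_mod W A"
  proof
    fix y assume "y \<in> span_mod W (\<tau> ` A)"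
    then obtain c w where cw: "w \<in> W" "y = lincomb (\<tau> ` A) c + w" unfolding span_mod_def by blast
    have "\<phi> (lincomb A (\<lambda>t. c (\<tau> t)) + w) = y"
      using cw inj
        by (simp add: linear_map_add[OF lin] linear_map_lincomb[OF lin] fixW onA lincomb_image)
    moreover have "lincomb A (\<lambda>t. c (\<tau> t)) + w \<in> span_mod W A" using cw by (auto intro: span_mod_I)
    ultimately show "y \<in> \<phi> ` span_mod W A" by blast
  qed
qed

lemma span_mod_Int:
  assumes sW: "subsp W" and iT: "indep_mod W T" and A: "A \<subseteq> T" and B: "B \<subseteq> T"
  shows "span_mod W A \<inter> span_mod W B \<subseteq> span_mod W (A \<inter> B)"
proof
  have finT: "finite T" using iT by (simp add: indep_mod_def)
  fix v assume "v \<in> span_mod W A \<inter> span_mod W B"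
  then obtain a w1 b w2 where ab: "w1 \<in> W" "v = lincomb A a + w1" "w2 \<in> W" "v = lincomb B b + w2"
    unfolding span_mod_def by blast
  define a' where "a' t = (if t \<in> A then a t else 0)" for t
  define b' where "b' t = (if t \<in> B then b t else 0)" for t
  have la: "lincomb A a = lincomb T a'" unfolding a'_def by (rule lincomb_extend[OF finT A])
  have lb: "lincomb B b = lincomb T b'" unfolding b'_def by (rule lincomb_extend[OF finT B])
  have "lincomb A a + w1 = lincomb B b + w2" using ab by simp
  then have "lincomb A a - lincomb B b = w2 - w1" by (simp add: algebra_simps)
  then have "lincomb T (\<lambda>t. a' t - b' t) = w2 - w1" using la lb lincomb_diff by metis
  then have "lincomb T (\<lambda>t. a' t - b' t) \<in> W" using subspace_diff[OF sW] ab by simp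
  then have eq: "\<forall>t\<in>T. a' t = b' t" using iT by (auto simp: indep_mod_def)
  have "lincomb A a = lincomb T (\<lambda>t. if t \<in> A \<inter> B then a t else 0)"
    unfolding la using eq A B by (intro lincomb_cong) (auto simp: a'_def b'_def)
  also have "\<dots> = lincomb (A \<inter> B) a"
    using lincomb_extend[OF finT order_trans[OF Int_lower1 A], where c = a] by simp
  finally show "v \<in> span_mod W (A \<inter> B)" using ab by (auto intro: span_mod_I)
qed

lemma quot_dim_span_mod_insert:
  assumes sW: "subsp W" and iT: "indep_mod W T" and R: "R \<subseteq> T" and y: "y \<in> T" "y \<notin> R"
  shows "quot_dim (span_mod W (insert y R)) (span_mod W R) 1"
proof -
  have finT: "finite T" using iT by (simp add: indep_mod_def)
  have finR: "finite (insert y R)" "finite R" using R finT y by (auto intro: finite_subset)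
  define U where "U = span_mod W R"
  have sU: "subsp U" using subspace_span_mod[OF sW] by (simp add: U_def)
  have yU: "y \<notin> U"
  proof
    assume "y \<in> U"
    moreover have "y \<in> span_mod W {y}" using span_mod_gen[of "{y}" W] sW by simp
    ultimately have "y \<in> span_mod W ({y} \<inter> R)" using span_mod_Int[OF sW iT, of "{y}" R] y R
      by (auto simp: U_def)
    then have "y \<in> W" using y by (simp add: span_mod_empty)
    then show False using indep_mod_not_in[OF iT y(1)] by simp
  qed
  show ?thesis unfolding quot_dim_def U_def[symmetric]
  proof (intro exI[of _ "{y}"] conjI)
    show "{y} \<subseteq> span_mod W (insert y R)" using span_mod_gen[OF finR(1) sW] by simp
    show "finite {y}" "card {y} = 1" by auto
    show "span_mod W (insert y R) \<subseteq> span_mod U {y}"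
    proof (rule span_mod_least[OF subspace_span_mod[OF sU]])
      have "W \<subseteq> U" unfolding U_def by (rule span_mod_base[OF sW])
      then show "W \<subseteq> span_mod U {y}" using span_mod_base[OF sU] by blast
      have "R \<subseteq> U" unfolding U_def by (rule span_mod_gen[OF finR(2) sW])
      then show "insert y R \<subseteq> span_mod U {y}"
        using span_mod_base[OF sU] span_mod_gen[of "{y}" U] sU by auto
    qed
    show "indep_mod U {y}"
      using indep_mod_insert[OF sU _, of "{}" y] yU by (simp add: indep_mod_def span_mod_empty)
  qed
qed

lemma adjacent_span_mod_exchange:
  assumes sW: "subsp W" and iT: "indep_mod W T" and R: "R \<subseteq> T"
    and x: "x \<in> T" "x \<notin> R" and y: "y \<in> T" "y \<notin> R" and xy: "x \<noteq> y"
  shows "adjacent smult (span_mod W (insert x R)) (span_mod W (insert y R))"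
proof -
  have finT: "finite T" using iT by (simp add: indep_mod_def)
  define P where "P = span_mod W (insert x R)"
  define Q where "Q = span_mod W (insert y R)"
  define U where "U = span_mod W R"
  have sPQ: "subsp P" "subsp Q" using subspace_span_mod[OF sW] by (simp_all add: P_def Q_def)
  have PQU: "P \<inter> Q \<subseteq> U"
    using span_mod_Int[OF sW iT, of "insert x R" "insert y R"] R x y xy
      by (auto simp: P_def Q_def U_def)
  have finxy: "finite (insert x R)" "finite (insert y R)"
    using R x y finT by (auto intro: finite_subset)
  moreover have "U \<subseteq> P" "U \<subseteq> Q" unfolding U_def P_def Q_def
    using span_mod_mono[OF sW subset_refl finxy(1), of R]
      span_mod_mono[OF sW subset_refl finxy(2), of R]
    by auto
  ultimately have PQ: "P \<inter> Q = U" "Q \<inter> P = U" using PQU by auto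
  have dQ: "quot_dim Q (P \<inter> Q) 1"
    using quot_dim_span_mod_insert[OF sW iT R y] PQ by (simp add: Q_def U_def)
  have dP: "quot_dim P (Q \<inter> P) 1"
    using quot_dim_span_mod_insert[OF sW iT R x] PQ by (simp add: P_def U_def)
  have "quot_dim (ssum P Q) P 1" using quot_dim_ssum_iff_Int[OF sPQ] dQ by simp
  moreover have "quot_dim (ssum P Q) Q 1"
    using quot_dim_ssum_iff_Int[OF sPQ(2,1)] dP by (simp add: ssum_commute)
  ultimately show ?thesis unfolding adjacent_def P_def[symmetric] Q_def[symmetric]
    using qdim_eq_iff_quot_dim sPQ by simp
qed

lemma Gr_span_mod_exchange:
  assumes sW: "subsp W" and iT: "indep_mod W (Sx \<union> Sy)" and disj: "Sx \<inter> Sy = {}"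
    and \<sigma>: "bij_betw \<sigma> Sx Sy" and X: "span_mod W Sx \<in> Gr smult" and J: "J \<subseteq> Sx"
  shows "span_mod W ((Sx - J) \<union> \<sigma> ` J) \<in> Gr smult"
proof -
  obtain \<tau> where \<tau>: "\<And>t. t \<in> Sx \<union> Sy \<Longrightarrow> \<tau> t \<in> Sx \<union> Sy"
    "\<And>t. t \<in> Sx \<union> Sy \<Longrightarrow> \<tau> (\<tau> t) = t" "\<tau> ` Sx = (Sx - J) \<union> \<sigma> ` J"
    using partial_swap_exists[OF \<sigma> disj J] by blast
  obtain C where C: "subsp C" "W \<subseteq> C" "indep_mod C (Sx \<union> Sy)" "span_mod C (Sx \<union> Sy) = UNIV"
    using complement_exists[OF sW iT] by blast
  obtain \<phi> where \<phi>: "linear_map \<phi>" "\<And>v. \<phi> (\<phi> v) = v" "\<And>c. c \<in> C \<Longrightarrow> \<phi> c = c"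
    "\<And>t. t \<in> Sx \<union> Sy \<Longrightarrow> \<phi> t = \<tau> t"
    using linear_involution_extending[OF C(1,3,4) \<tau>(1,2)] by blast
  have inj: "inj_on \<tau> Sx" by (rule inj_on_inverseI[of _ \<tau>]) (use \<tau>(2) in auto)
  have "\<phi> ` span_mod W Sx = span_mod W (\<tau> ` Sx)"
    by (rule image_span_mod[OF \<phi>(1) _ _ inj]) (use \<phi> C(2) in auto)
  then show ?thesis
    using Gr_image_linear_involution[OF \<phi>(1,2) X] \<tau>(3) by simp
qed

lemma adjacent_span_mod_exchange_step:
  assumes sW: "subsp W" and iT: "indep_mod W (Sx \<union> Sy)" and disj: "Sx \<inter> Sy = {}"
    and \<sigma>: "bij_betw \<sigma> Sx Sy" and J: "J \<subseteq> Sx" and x: "x \<in> Sx" "x \<notin> J"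
  shows "adjacent smult (span_mod W ((Sx - J) \<union> \<sigma> ` J))
                        (span_mod W ((Sx - insert x J) \<union> \<sigma> ` insert x J))"
proof -
  define R where "R = (Sx - insert x J) \<union> \<sigma> ` J"
  have inj: "inj_on \<sigma> Sx" and im: "\<sigma> ` Sx = Sy" using \<sigma> by (auto simp: bij_betw_def)
  have "\<sigma> x \<notin> \<sigma> ` J" using inj x J by (auto simp: inj_on_def)
  moreover have "\<sigma> x \<in> Sy" using im x by blast
  ultimately have "\<sigma> x \<in> Sx \<union> Sy" "\<sigma> x \<notin> R" "x \<noteq> \<sigma> x" using disj x by (auto simp: R_def)
  moreover have "R \<subseteq> Sx \<union> Sy" "x \<in> Sx \<union> Sy" "x \<notin> R" using J im x disj by (auto simp: R_def)
  moreover have "(Sx - J) \<union> \<sigma> ` J = insert x R"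
    and "(Sx - insert x J) \<union> \<sigma> ` insert x J = insert (\<sigma> x) R"
    using x by (auto simp: R_def)
  ultimately show ?thesis using adjacent_span_mod_exchange[OF sW iT] by simp
qed

lemma indep_mod_Un_Int:
  assumes sX: "subsp X" and sY: "subsp Y"
    and Sx: "Sx \<subseteq> X" "indep_mod (X \<inter> Y) Sx" and Sy: "Sy \<subseteq> Y" "indep_mod (X \<inter> Y) Sy"
  shows "indep_mod (X \<inter> Y) (Sx \<union> Sy)"
  unfolding indep_mod_def
proof (intro conjI allI impI)
  have fin: "finite Sx" "finite Sy" using Sx Sy by (simp_all add: indep_mod_def)
  have disj: "Sx \<inter> Sy = {}" using indep_mod_not_in[OF Sx(2)] Sx(1) Sy(1) by blast
  show "finite (Sx \<union> Sy)" using fin by simp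
  fix c assume c: "lincomb (Sx \<union> Sy) c \<in> X \<inter> Y"
  have split: "lincomb (Sx \<union> Sy) c = lincomb Sx c + lincomb Sy c"
    by (rule lincomb_union[OF fin disj])
  have "lincomb Sx c \<in> X" "lincomb Sy c \<in> Y"
    using subspace_lincomb[OF sX Sx(1)] subspace_lincomb[OF sY Sy(1)] .
  then have "lincomb Sy c \<in> X \<inter> Y" using c split subspace_add_cancel[OF sX] by simp
  then have zy: "\<forall>s\<in>Sy. c s = 0" using Sy(2) by (simp add: indep_mod_def)
  then have "lincomb Sx c \<in> X \<inter> Y" using c split lincomb_cong[of Sy c "\<lambda>_. 0"] by simp
  then show "\<forall>s\<in>Sx \<union> Sy. c s = 0" using zy Sx(2) by (auto simp: indep_mod_def)
qed

lemma gwalk_exists: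
  assumes X: "X \<in> Gr smult" and Y: "Y \<in> Gr smult"
    and dX: "quot_dim X (X \<inter> Y) d" and dY: "quot_dim Y (X \<inter> Y) d"
  shows "gwalk smult X Y d"
proof -
  define W where "W = X \<inter> Y"
  have sX: "subsp X" and sY: "subsp Y" using X Y by (simp_all add: Gr_subspace)
  have sW: "subsp W" using subspace_Int[OF sX sY] by (simp add: W_def)
  obtain Sx where Sx: "Sx \<subseteq> X" "finite Sx" "card Sx = d" "indep_mod W Sx" "span_mod W Sx = X"
    using quot_dim_basis[OF sX sW _ dX[folded W_def]] W_def by blast
  obtain Sy where Sy: "Sy \<subseteq> Y" "finite Sy" "card Sy = d" "indep_mod W Sy" "span_mod W Sy = Y"
    using quot_dim_basis[OF sY sW _ dY[folded W_def]] W_def by blast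
  have disj: "Sx \<inter> Sy = {}" using indep_mod_not_in[OF Sx(4)] Sx(1) Sy(1) by (auto simp: W_def)
  have iT: "indep_mod W (Sx \<union> Sy)"
    using indep_mod_Un_Int[OF sX sY] Sx Sy by (simp add: W_def)
  obtain \<sigma> where \<sigma>: "bij_betw \<sigma> Sx Sy"
    using finite_same_card_bij[OF Sx(2) Sy(2)] Sx(3) Sy(3) by auto
  obtain e where e: "bij_betw e {..<d} Sx"
    using ex_bij_betw_nat_finite[OF Sx(2)] Sx(3) by (auto simp: atLeast0LessThan)
  define p where "p k = span_mod W ((Sx - e ` {..<k}) \<union> \<sigma> ` e ` {..<k})" for k
  have eJ: "e ` {..<k} \<subseteq> Sx" if "k \<le> d" for k using e that by (auto simp: bij_betw_def)
  have "p 0 = X" using Sx(5) by (simp add: p_def)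
  moreover have "p d = Y" using e \<sigma> Sy(5) by (simp add: p_def bij_betw_def)
  moreover have "p k \<in> Gr smult" if "k \<le> d" for k
    unfolding p_def using Gr_span_mod_exchange[OF sW iT disj \<sigma> _ eJ[OF that]] X Sx(5) by simp
  moreover have "adjacent smult (p k) (p (Suc k))" if k: "k < d" for k
  proof -
    have "inj_on e {..<d}" using e by (simp add: bij_betw_def)
    then have "e k \<notin> e ` {..<k}" using inj_on_image_mem_iff[of e "{..<d}" k "{..<k}"] k by auto
    moreover have "e k \<in> Sx" using e k by (auto simp: bij_betw_def)
    ultimately show ?thesis
      unfolding p_def lessThan_Suc image_insert
      using adjacent_span_mod_exchange_step[OF sW iT disj \<sigma> eJ] k by simp
  qed
  ultimately show ?thesis unfolding gwalk_def by (intro exI[of _ p]) auto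
qed

subsection \<open>Distance equals the common codimension\<close>

lemma codim_in_sum_iff_Int:
  assumes "subsp X" "subsp Y"
  shows "codim_in_sum X Y n \<longleftrightarrow> quot_dim X (X \<inter> Y) n \<and> quot_dim Y (X \<inter> Y) n"
  using quot_dim_ssum_iff_Int[OF assms, of n] quot_dim_ssum_iff_Int[OF assms(2,1), of n]
  by (auto simp: codim_in_sum_def ssum_commute Int_commute)

lemma codim_in_sum_unique:
  "subsp X \<Longrightarrow> codim_in_sum X Y a \<Longrightarrow> codim_in_sum X Y b \<Longrightarrow> a = b"
  using quot_dim_unique by (auto simp: codim_in_sum_def)

lemma gdist_eq_iff_codim_in_sum:
  assumes X: "X \<in> Gr smult" and Y: "Y \<in> Gr smult"
  shows "gdist smult X Y = enat d \<longleftrightarrow> codim_in_sum X Y d"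
proof -
  have sX: "subsp X" and sY: "subsp Y" using X Y by (simp_all add: Gr_subspace)
  have gdist_eq: "gdist smult X Y = enat n" if n: "codim_in_sum X Y n" for n
  proof (rule antisym)
    have "gwalk smult X Y n"
      using gwalk_exists[OF X Y] n codim_in_sum_iff_Int[OF sX sY] by blast
    then show "gdist smult X Y \<le> enat n" unfolding gdist_def by (auto intro: Inf_lower)
    show "enat n \<le> gdist smult X Y" unfolding gdist_def
    proof (rule Inf_greatest)
      fix m assume "m \<in> enat ` {k. gwalk smult X Y k}"
      then obtain k where k: "m = enat k" "gwalk smult X Y k" by auto
      then obtain b where "b \<le> k" "codim_in_sum X Y b" using gwalk_codim_in_sum_le by blast
      then show "enat n \<le> m" using codim_in_sum_unique[OF sX n] k by simp
    qed
  qed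
  show ?thesis
  proof
    assume d: "gdist smult X Y = enat d"
    then obtain k where "gwalk smult X Y k"
      by (fastforce simp: gdist_def top_enat_def)
    then obtain b where "codim_in_sum X Y b" using gwalk_codim_in_sum_le by blast
    then show "codim_in_sum X Y d" using gdist_eq d by auto
  qed (rule gdist_eq)
qed

end

theorem mainTheorem7:
  fixes smult :: "'k::division_ring \<Rightarrow> 'v::ab_group_add \<Rightarrow> 'v"
    and X Y :: "'v set" and d :: nat
  assumes "left_vector_space smult"
    and "Gr smult \<noteq> {}"
    and "X \<in> Gr smult" and "Y \<in> Gr smult"
  shows "(gdist smult X Y = enat d \<longleftrightarrow>
            qdim_eq smult (ssum X Y) X d \<and> qdim_eq smult (ssum X Y) Y d)
       \<and> (qdim_eq smult (ssum X Y) X d \<and> qdim_eq smult (ssum X Y) Y d \<longleftrightarrow>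
            qdim_eq smult X (X \<inter> Y) d \<and> qdim_eq smult Y (X \<inter> Y) d)"
proof -
  interpret left_vs smult by (rule left_vs.intro) (fact assms(1))
  have sX: "subspace smult X" and sY: "subspace smult Y"
    using assms(3,4) by (simp_all add: Gr_subspace)
  note qdim_eq_iff = qdim_eq_iff_quot_dim[OF sX] qdim_eq_iff_quot_dim[OF sY]
    qdim_eq_iff_quot_dim[OF subspace_Int[OF sX sY]]
  show ?thesis
    using gdist_eq_iff_codim_in_sum[OF assms(3,4)] codim_in_sum_iff_Int[OF sX sY]
    by (simp add: qdim_eq_iff codim_in_sum_def)
qed

end
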